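(* Let $\sigma$ be a linear extension of $\preceq$ and let $(r,k)$ be a bounding state satisfying the Active-item and Partial-order invariants such that $(r,k)$ bounds $\sigma$. Let $i\in\{1,\dots,n-1\}$ and $c\in\{0,1\}$, and define $c'=1-c$ if $\sigma(i)=r(i+1)$ and $c'=c$ otherwise. Then $\mathrm{AT}(\sigma,i,c')$ is bounded by $\mathrm{BC}((r,k),i,c)$.
   Context: Let $\preceq$ be a partial order on $S=\{1,\dots,n\}$, $n\ge2$, such that the identity permutation is a linear extension ($a\preceq b$ implies $a\le b$). A permutation is written $\sigma=(\sigma(1),\dots,\sigma(n))$ with $\sigma(p)$ the item in position $p$; it is a linear extension if for all $p<q$, $\neg(\sigma(q)\preceq\sigma(p))$. $\mathrm{AT}(\sigma,i,c)$: if $c=1$ and $\neg(\sigma(i)\preceq\sigma(i+1))$, swap the entries in positions $i,i+1$; return the result. Introduce a symbol $*$ and declare every comparison $x\preceq y$ in which $x$ or $y$ is $*$ to be false. A bounding state is a pair $(r,k)$ with $r\in(\{*\}\cup S)^n$, $k\in\{1,\dots,n\}$, whose non-$*$ entries are exactly $1,\dots,k$ (active items), each appearing once. Active-item invariant: every $a\le k$ appears in $r$. Partial-order invariant: if $r(p)=a\le k$, $r(q)=b\le k$, $a\neq b$, $a\preceq b$, then $p<q$. $(r,k)$ bounds $\sigma$ if for all $a\le k$ and all positions $p,q$: $\sigma(p)=a$ and $r(q)=a$ imply $p\le q$. $\mathrm{BC}((r,k),i,c)$: (1) if $c=1$ and $\neg(r(i)\preceq r(i+1))$, swap $r(i),r(i+1)$;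 (2) if now $r(n)=*$, set $r(n)\leftarrow k+1$, $k\leftarrow k+1$; (3) return $(r,k)$. *)

theory Defs
  imports Main
begin

text \<open>A permutation is a function
  sigma :: nat => nat, sigma p = item at position p. A bounding-state vector r
  maps positions to nat option, where None plays the role of the symbol *.\<close>

definition partial_order_ext :: "nat \<Rightarrow> (nat \<Rightarrow> nat \<Rightarrow> bool) \<Rightarrow> bool" where
  "partial_order_ext n le \<longleftrightarrow>
     (\<forall>a\<in>{1..n}. le a a) \<and>
     (\<forall>a\<in>{1..n}. \<forall>b\<in>{1..n}. le a b \<and> le b a \<longrightarrow> a = b) \<and>
     (\<forall>a\<in>{1..n}. \<forall>b\<in>{1..n}. \<forall>c\<in>{1..n}. le a b \<and> le b c \<longrightarrow> le a c) \<and>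
     (\<forall>a\<in>{1..n}. \<forall>b\<in>{1..n}. le a b \<longrightarrow> a \<le> b)"

definition linear_extension :: "nat \<Rightarrow> (nat \<Rightarrow> nat \<Rightarrow> bool) \<Rightarrow> (nat \<Rightarrow> nat) \<Rightarrow> bool" where
  "linear_extension n le \<sigma> \<longleftrightarrow> bij_betw \<sigma> {1..n} {1..n} \<and>
     (\<forall>p\<in>{1..n}. \<forall>q\<in>{1..n}. p < q \<longrightarrow> \<not> le (\<sigma> q) (\<sigma> p))"

fun leo :: "(nat \<Rightarrow> nat \<Rightarrow> bool) \<Rightarrow> nat option \<Rightarrow> nat option \<Rightarrow> bool" where
  "leo le (Some x) (Some y) = le x y"
| "leo le _ _ = False"

definition swap_pos :: "('a \<Rightarrow> 'b) \<Rightarrow> 'a \<Rightarrow> 'a \<Rightarrow> 'a \<Rightarrow> 'b" where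
  "swap_pos f i j = f(i := f j, j := f i)"

definition AT :: "(nat \<Rightarrow> nat \<Rightarrow> bool) \<Rightarrow> (nat \<Rightarrow> nat) \<Rightarrow> nat \<Rightarrow> nat \<Rightarrow> (nat \<Rightarrow> nat)" where
  "AT le \<sigma> i c = (if c = 1 \<and> \<not> le (\<sigma> i) (\<sigma> (i+1)) then swap_pos \<sigma> i (i+1) else \<sigma>)"

definition bounding_state :: "nat \<Rightarrow> (nat \<Rightarrow> nat option) \<Rightarrow> nat \<Rightarrow> bool" where
  "bounding_state n r k \<longleftrightarrow> 1 \<le> k \<and> k \<le> n \<and>
     (\<forall>p\<in>{1..n}. \<forall>a. r p = Some a \<longrightarrow> a \<in> {1..k}) \<and>
     (\<forall>a\<in>{1..k}. \<forall>p\<in>{1..n}. \<forall>q\<in>{1..n}. r p = Some a \<and> r q = Some a \<longrightarrow> p = q)"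

definition active_item_inv :: "nat \<Rightarrow> (nat \<Rightarrow> nat option) \<Rightarrow> nat \<Rightarrow> bool" where
  "active_item_inv n r k \<longleftrightarrow> (\<forall>a\<in>{1..k}. \<exists>p\<in>{1..n}. r p = Some a)"

definition partial_order_inv :: "nat \<Rightarrow> (nat \<Rightarrow> nat \<Rightarrow> bool) \<Rightarrow> (nat \<Rightarrow> nat option) \<Rightarrow> nat \<Rightarrow> bool" where
  "partial_order_inv n le r k \<longleftrightarrow>
     (\<forall>p\<in>{1..n}. \<forall>q\<in>{1..n}. \<forall>a\<in>{1..k}. \<forall>b\<in>{1..k}.
        r p = Some a \<and> r q = Some b \<and> a \<noteq> b \<and> le a b \<longrightarrow> p < q)"

definition bounds :: "nat \<Rightarrow> (nat \<Rightarrow> nat option) \<times> nat \<Rightarrow> (nat \<Rightarrow> nat) \<Rightarrow> bool" where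
  "bounds n rk \<sigma> \<longleftrightarrow> (\<forall>a\<in>{1..snd rk}. \<forall>p\<in>{1..n}. \<forall>q\<in>{1..n}.
       \<sigma> p = a \<and> fst rk q = Some a \<longrightarrow> p \<le> q)"

definition BC :: "nat \<Rightarrow> (nat \<Rightarrow> nat \<Rightarrow> bool) \<Rightarrow> (nat \<Rightarrow> nat option) \<times> nat \<Rightarrow> nat \<Rightarrow> nat
                   \<Rightarrow> (nat \<Rightarrow> nat option) \<times> nat" where
  "BC n le rk i c =
     (let r = fst rk; k = snd rk;
          r1 = (if c = 1 \<and> \<not> leo le (r i) (r (i+1)) then swap_pos r i (i+1) else r)
      in if r1 n = None then (r1(n := Some (k+1)), k+1) else (r1, k))"

end

theory Submission
  imports Defs
begin

text \<open>Bounding can only break if the permutation moves an item up (from i to i+1) while the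
  bounding state keeps it at i, or if the bounding state moves an item down (from i+1 to i)
  while the permutation keeps it at i+1. In the first case the bounding state holds that
  item at i, and the linear-extension and bounding properties force its comparison with
  r(i+1) to agree with the permutation's; in the second case the partial-order invariant
  forces r(i) = \<sigma>(i), so the bounding state would not have swapped. Activating a new
  item at the last position never violates bounding.\<close>

definition swaps :: "('a \<Rightarrow> 'a \<Rightarrow> bool) \<Rightarrow> (nat \<Rightarrow> 'a) \<Rightarrow> nat \<Rightarrow> nat \<Rightarrow> bool" where
  "swaps le f i c \<longleftrightarrow> c = 1 \<and> \<not> le (f i) (f (i+1))"

definition swap_step :: "('a \<Rightarrow> 'a \<Rightarrow> bool) \<Rightarrow> (nat \<Rightarrow> 'a) \<Rightarrow> nat \<Rightarrow> nat \<Rightarrow> nat \<Rightarrow> 'a" where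
  "swap_step le f i c = (if swaps le f i c then swap_pos f i (i+1) else f)"

fun activate :: "nat \<Rightarrow> (nat \<Rightarrow> nat option) \<times> nat \<Rightarrow> (nat \<Rightarrow> nat option) \<times> nat" where
  "activate n (r, k) = (if r n = None then (r(n := Some (k+1)), k+1) else (r, k))"

definition coupled_coin :: "(nat \<Rightarrow> nat) \<Rightarrow> (nat \<Rightarrow> nat option) \<Rightarrow> nat \<Rightarrow> nat \<Rightarrow> nat" where
  "coupled_coin \<sigma> r i c = (if r (i+1) = Some (\<sigma> i) then 1 - c else c)"

lemma AT_eq_swap_step: "AT le \<sigma> i c = swap_step le \<sigma> i c"
  by (simp add: AT_def swap_step_def swaps_def)

lemma BC_eq_activate_swap_step: "BC n le (r, k) i c = activate n (swap_step (leo le) r i c, k)"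
  by (simp add: BC_def swap_step_def swaps_def Let_def)

lemma boundsI:
  assumes "\<And>a p q. a \<in> {1..k} \<Longrightarrow> p \<in> {1..n} \<Longrightarrow> q \<in> {1..n} \<Longrightarrow> \<sigma> p = a \<Longrightarrow> r q = Some a \<Longrightarrow> p \<le> q"
  shows "bounds n (r, k) \<sigma>"
  using assms unfolding bounds_def fst_conv snd_conv by blast

lemma boundsD:
  assumes "bounds n (r, k) \<sigma>" "a \<in> {1..k}" "p \<in> {1..n}" "q \<in> {1..n}" "\<sigma> p = a" "r q = Some a"
  shows "p \<le> q"
  using assms(1) unfolding bounds_def fst_conv snd_conv using assms(2-6) by blast

lemma bounds_activate:
  assumes "bounds n (r, k) \<sigma>" "\<And>q. q \<in> {1..n} \<Longrightarrow> r q \<noteq> Some (k+1)"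
  shows "bounds n (activate n (r, k)) \<sigma>"
proof (cases "r n = None")
  case True
  have "bounds n (r(n := Some (k+1)), k+1) \<sigma>"
  proof (rule boundsI)
    fix a p q
    assume a: "a \<in> {1..k+1}" and p: "p \<in> {1..n}" and q: "q \<in> {1..n}"
      and "\<sigma> p = a" and r_q: "(r(n := Some (k+1))) q = Some a"
    show "p \<le> q"
    proof (cases "q = n")
      case False
      then have "r q = Some a"
        using r_q by simp
      moreover have "a \<noteq> k+1"
        using assms(2)[OF q] calculation by simp
      ultimately show ?thesis
        using boundsD[OF assms(1) _ p q \<open>\<sigma> p = a\<close>] a by simp
    qed (use p in simp)
  qed
  then show ?thesis
    using True by simp
next
  case False
  then show ?thesis
    using assms(1) by (simp only: activate.simps if_False)
qed

lemma swap_step_cases: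
  assumes "swap_step le f i c p = x"
  obtains (fixed) "f p = x" "\<not> swaps le f i c \<or> p \<notin> {i, i+1}"
    | (moved_up) "swaps le f i c" "p = i+1" "f i = x"
    | (moved_down) "swaps le f i c" "p = i" "f (i+1) = x"
  using assms by (cases "swaps le f i c") (auto simp: swap_step_def swap_pos_def split: if_splits)

locale coupled_step =
  fixes n :: nat and le :: "nat \<Rightarrow> nat \<Rightarrow> bool" and \<sigma> :: "nat \<Rightarrow> nat"
    and r :: "nat \<Rightarrow> nat option" and k i c :: nat
  assumes le_imp_less_eq: "\<And>a b. a \<in> {1..n} \<Longrightarrow> b \<in> {1..n} \<Longrightarrow> le a b \<Longrightarrow> a \<le> b"
    and linear_ext: "linear_extension n le \<sigma>"
    and state: "bounding_state n r k"
    and active: "active_item_inv n r k"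
    and po_inv: "partial_order_inv n le r k"
    and bounded: "bounds n (r, k) \<sigma>"
    and i_range: "i \<in> {1..n-1}"
begin

abbreviation "c' \<equiv> coupled_coin \<sigma> r i c"

lemma positions: "i \<in> {1..n}" "i+1 \<in> {1..n}"
  using i_range by auto

lemma sigma_in: "p \<in> {1..n} \<Longrightarrow> \<sigma> p \<in> {1..n}"
  using linear_ext by (auto simp: linear_extension_def bij_betw_def)

lemma sigma_surj: "a \<in> {1..n} \<Longrightarrow> \<exists>p\<in>{1..n}. \<sigma> p = a"
  using linear_ext unfolding linear_extension_def bij_betw_def by (metis imageE)

lemma sigma_inj: "inj_on \<sigma> {1..n}"
  using linear_ext by (simp add: linear_extension_def bij_betw_def)

lemma sigma_succ_neq: "\<sigma> i \<noteq> \<sigma> (i+1)"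
  using inj_onD[OF sigma_inj _ positions] by force

lemma sigma_not_le_earlier: "p \<in> {1..n} \<Longrightarrow> q \<in> {1..n} \<Longrightarrow> p < q \<Longrightarrow> \<not> le (\<sigma> q) (\<sigma> p)"
  using linear_ext unfolding linear_extension_def by blast

lemma r_active: "p \<in> {1..n} \<Longrightarrow> r p = Some a \<Longrightarrow> a \<in> {1..k}"
  using state unfolding bounding_state_def by blast

lemma k_le_n: "k \<le> n"
  using state by (simp add: bounding_state_def)

lemma r_inj:
  assumes "p \<in> {1..n}" "q \<in> {1..n}" "r p = Some a" "r q = Some a"
  shows "p = q"
proof -
  have "\<forall>a\<in>{1..k}. \<forall>p\<in>{1..n}. \<forall>q\<in>{1..n}. r p = Some a \<and> r q = Some a \<longrightarrow> p = q"
    using state unfolding bounding_state_def by (elim conjE)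
  then show ?thesis
    using assms r_active[OF assms(1,3)] by (meson atLeastAtMost_iff)
qed

lemma r_succ_neq: "r i = Some a \<Longrightarrow> r (i+1) \<noteq> Some a"
  using r_inj positions by fastforce

lemma r_surj: "a \<in> {1..k} \<Longrightarrow> \<exists>q\<in>{1..n}. r q = Some a"
  using active by (simp add: active_item_inv_def)

lemma r_order:
  assumes "p \<in> {1..n}" "q \<in> {1..n}" "r p = Some a" "r q = Some b" "a \<noteq> b" "le a b"
  shows "p < q"
  using po_inv assms r_active[OF assms(1,3)] r_active[OF assms(2,4)]
  unfolding partial_order_inv_def by blast

lemma sigma_pos_le_r_pos: "p \<in> {1..n} \<Longrightarrow> q \<in> {1..n} \<Longrightarrow> \<sigma> p = a \<Longrightarrow> r q = Some a \<Longrightarrow> p \<le> q"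
  using boundsD[OF bounded r_active] by blast

lemma le_sigma_succ_if_le_r_succ:
  assumes "r i = Some (\<sigma> i)" "r (i+1) = Some b" "le (\<sigma> i) b"
  shows "le (\<sigma> i) (\<sigma> (i+1))"
proof -
  have "b \<in> {1..n}"
    using r_active[OF positions(2) assms(2)] k_le_n by auto
  then obtain p where p: "p \<in> {1..n}" "\<sigma> p = b"
    using sigma_surj by blast
  have "p \<le> i+1"
    using sigma_pos_le_r_pos[OF p(1) positions(2) p(2) assms(2)] .
  moreover have "p \<noteq> i"
    using p assms(1,2) r_succ_neq by auto
  moreover have "\<not> p < i"
    using sigma_not_le_earlier[OF p(1) positions(1)] p(2) assms(3) by blast
  ultimately have "p = i+1"
    by linarith
  then show ?thesis
    using p(2) assms(3) by simp
qed

lemma r_holds_sigma_if_le_succ: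
  assumes "r (i+1) = Some (\<sigma> (i+1))" "le (\<sigma> i) (\<sigma> (i+1))"
  shows "r i = Some (\<sigma> i)"
proof -
  have "\<sigma> i \<le> \<sigma> (i+1)"
    using le_imp_less_eq sigma_in positions assms(2) by blast
  then have "\<sigma> i \<in> {1..k}"
    using r_active[OF positions(2) assms(1)] sigma_in[OF positions(1)] by auto
  then obtain q where q: "q \<in> {1..n}" "r q = Some (\<sigma> i)"
    using r_surj by blast
  have "i \<le> q"
    using sigma_pos_le_r_pos[OF positions(1) q(1) refl q(2)] .
  moreover have "q < i+1"
    using r_order[OF q(1) positions(2) q(2) assms(1) sigma_succ_neq assms(2)] .
  ultimately have "q = i"
    by simp
  then show ?thesis
    using q(2) by simp
qed

lemma r_pos_ge_succ_if_sigma_moves_up: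
  assumes "swaps le \<sigma> i c'" "q \<in> {1..n}" "swap_step (leo le) r i c q = Some (\<sigma> i)"
  shows "i+1 \<le> q"
  using assms(3)
proof (cases rule: swap_step_cases)
  case fixed
  have "i \<le> q"
    using sigma_pos_le_r_pos[OF positions(1) assms(2) refl fixed(1)] .
  moreover have "q \<noteq> i"
  proof
    assume "q = i"
    then have r_i: "r i = Some (\<sigma> i)" and no_swap: "\<not> swaps (leo le) r i c"
      using fixed by auto
    have "c = 1"
      using assms(1) r_succ_neq[OF r_i] by (simp add: swaps_def coupled_coin_def)
    then obtain b where "r (i+1) = Some b" "le (\<sigma> i) b"
      using no_swap r_i by (cases "r (i+1)") (auto simp: swaps_def)
    then show False
      using le_sigma_succ_if_le_r_succ r_i assms(1) by (auto simp: swaps_def)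
  qed
  ultimately show ?thesis
    by simp
next
  case moved_down
  then show ?thesis
    using assms(1) by (simp add: swaps_def coupled_coin_def)
qed simp

lemma sigma_pos_le_if_r_moves_down:
  assumes "swaps (leo le) r i c" "r (i+1) = Some a"
    "p \<in> {1..n}" "swap_step le \<sigma> i c' p = a"
  shows "p \<le> i"
  using assms(4)
proof (cases rule: swap_step_cases)
  case fixed
  have "p \<le> i+1"
    using sigma_pos_le_r_pos[OF assms(3) positions(2) fixed(1) assms(2)] .
  moreover have "p \<noteq> i+1"
  proof
    assume "p = i+1"
    then have a: "\<sigma> (i+1) = a" and no_swap: "\<not> swaps le \<sigma> i c'"
      using fixed by auto
    have "c' = 1"
      using assms(1,2) a sigma_succ_neq by (auto simp: swaps_def coupled_coin_def)
    then have le_succ: "le (\<sigma> i) (\<sigma> (i+1))"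
      using no_swap by (simp add: swaps_def)
    then have "r i = Some (\<sigma> i)"
      using r_holds_sigma_if_le_succ assms(2) a by blast
    then have "leo le (r i) (r (i+1))"
      using assms(2) a le_succ by simp
    then show False
      using assms(1) by (simp add: swaps_def)
  qed
  ultimately show ?thesis
    by simp
next
  case moved_up
  then show ?thesis
    using assms(1,2) by (simp add: swaps_def coupled_coin_def)
qed simp

lemma swapped_r_active:
  assumes "q \<in> {1..n}" "swap_step (leo le) r i c q = Some a"
  shows "a \<in> {1..k}"
  using assms(2) by (cases rule: swap_step_cases) (use assms(1) positions r_active in blast)+

lemma bounds_swap_steps: "bounds n (swap_step (leo le) r i c, k) (swap_step le \<sigma> i c')"
proof (rule boundsI)
  fix a p q
  assume p: "p \<in> {1..n}" and q: "q \<in> {1..n}"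
    and sigma'_p: "swap_step le \<sigma> i c' p = a" and r'_q: "swap_step (leo le) r i c q = Some a"
  show "p \<le> q"
  proof (cases "swaps le \<sigma> i c' \<and> p = i+1")
    case True
    then have "\<sigma> i = a"
      using sigma'_p by (simp add: swap_step_def swap_pos_def)
    then show ?thesis
      using r_pos_ge_succ_if_sigma_moves_up[OF _ q] True r'_q by blast
  next
    case sigma_not_up: False
    show ?thesis
    proof (cases "swaps (leo le) r i c \<and> q = i")
      case True
      then have "r (i+1) = Some a"
        using r'_q by (simp add: swap_step_def swap_pos_def)
      then show ?thesis
        using sigma_pos_le_if_r_moves_down[OF _ _ p sigma'_p] True by blast
    next
      case r_not_down: False
      have "\<exists>p0\<in>{1..n}. \<sigma> p0 = a \<and> p \<le> p0"
        using sigma'_p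
      proof (cases rule: swap_step_cases)
        case fixed
        then show ?thesis
          using p by blast
      next
        case moved_down
        then show ?thesis
          using positions by auto
      qed (use sigma_not_up in simp)
      moreover have "\<exists>q0\<in>{1..n}. r q0 = Some a \<and> q0 \<le> q"
        using r'_q
      proof (cases rule: swap_step_cases)
        case fixed
        then show ?thesis
          using q by blast
      next
        case moved_up
        then show ?thesis
          using positions by auto
      qed (use r_not_down in simp)
      ultimately obtain p0 q0 where "p0 \<in> {1..n}" "\<sigma> p0 = a" "p \<le> p0"
        and "q0 \<in> {1..n}" "r q0 = Some a" "q0 \<le> q"
        by blast
      then show ?thesis
        using sigma_pos_le_r_pos[of p0 q0 a] by simp
    qed
  qed
qed

end

theorem theorem2:
  fixes n :: nat and le :: "nat \<Rightarrow> nat \<Rightarrow> bool" and \<sigma> :: "nat \<Rightarrow> nat"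
    and r :: "nat \<Rightarrow> nat option" and k i c :: nat
  assumes "n \<ge> 2"
    and "partial_order_ext n le"
    and "linear_extension n le \<sigma>"
    and "bounding_state n r k"
    and "active_item_inv n r k"
    and "partial_order_inv n le r k"
    and "bounds n (r, k) \<sigma>"
    and "i \<in> {1..n-1}"
    and "c \<in> {0, 1}"
  shows "bounds n (BC n le (r, k) i c)
           (AT le \<sigma> i (if r (i+1) = Some (\<sigma> i) then 1 - c else c))"
proof -
  have "\<forall>a\<in>{1..n}. \<forall>b\<in>{1..n}. le a b \<longrightarrow> a \<le> b"
    using assms(2) unfolding partial_order_ext_def by (elim conjE)
  then interpret coupled_step n le \<sigma> r k i c
    using assms(3-8) by unfold_locales blast+
  have "bounds n (activate n (swap_step (leo le) r i c, k)) (swap_step le \<sigma> i c')"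
    using bounds_activate[OF bounds_swap_steps] swapped_r_active by fastforce
  then show ?thesis
    unfolding AT_eq_swap_step BC_eq_activate_swap_step coupled_coin_def .
qed

end
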